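(* Let $k\ge0$, $n>2k$ and $0\le m\le\lfloor(n-2k)/2\rfloor$. For $z^n\in\mathcal Z^n$ let $\hat{\mathbf S}_{k,m}(z^n)=(\hat\sigma_{k+1},\dots,\hat\sigma_{n-k})$ be any minimizer of $\tilde L_{\mathbf S}(z^n)$ over $\mathbf S\in\mathcal S^n_{k,m}(z^n)$. Then for all $\epsilon>0$ and all $x^n\in\mathcal X^n$, $$\Pr\Big(L_{\hat{\mathbf S}_{k,m}(Z^n)}(x_{k+1}^{n-k},Z^n)-D_{k,m}(x^n,Z^n)>\epsilon\Big)\le 2(k+1)\exp\Bigg(-(n-2k)\Big[\frac{\epsilon^2}{2(k+1)L_{\max}^2}-2|\mathcal Z|^{2k}\Big\{h\Big(\frac{m}{n-2k}\Big)+\frac{(m+1)\ln N}{n-2k}\Big\}\Big]\Bigg),$$ where $h(x)=-x\ln x-(1-x)\ln(1-x)$ and $N=|\mathcal S|$.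
   Context: Let $\mathcal X,\mathcal Z,\hat{\mathcal X}$ be finite alphabets and $\Pi=\{\Pi(x,z)\}$ a $|\mathcal X|\times|\mathcal Z|$ stochastic matrix (discrete memoryless channel) of full row rank. For deterministic $x^n\in\mathcal X^n$, the channel output $Z^n$ has independent components with $\Pr(Z_t=z)=\Pi(x_t,z)$. Fix a loss $\Lambda:\mathcal X\times\hat{\mathcal X}\to[0,\infty)$, $\Lambda_{\max}=\max_{x,\hat x}\Lambda(x,\hat x)$. Let $\mathcal S$ be the set of all maps $s:\mathcal Z\to\hat{\mathcal X}$. Fix a real $|\mathcal Z|\times|\mathcal X|$ matrix $H$ with $\Pi H=I$; $h(z)\in\mathbb R^{\mathcal X}$ is the column vector equal to the $z$-th row of $H$. For $s\in\mathcal S$, $\rho_x(s)=\sum_z\Lambda(x,s(z))\Pi(x,z)$ and $\ell(z,s)=h(z)^T\rho(s)$. Let $\ell_{\max}=\max_{z,s}\ell(z,s)-\min_{z,s}\ell(z,s)$, $L_{\max}=\Lambda_{\max}+\ell_{\max}$. For $z^n$ and $k+1\le t\le n-k$ let $\mathbf c_t=(z_{t-k}^{t-1},z_{t+1}^{t+k})\in\mathcal Z^{2k}$, and for $\mathbf c\in\mathcal Z^{2k}$ let $\mathcal T(\mathbf c)=\{t:k+1\le t\le n-k,\ \mathbf c_t=\mathbf c\}$. Define $\mathcal S^n_{k,m}(z^n)$ as the set of tuples $\mathbf S=(\sigma_{k+1},\dots,\sigma_{n-k})\in\mathcal S^{n-2k}$ such that for every $\mathbf c\in\mathcal Z^{2k}$,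 writing $\mathcal T(\mathbf c)=\{\tau_1<\dots<\tau_r\}$, the number of $j<r$ with $\sigma_{\tau_j}\ne\sigma_{\tau_{j+1}}$ is at most $m$. For such $\mathbf S$ let $L_{\mathbf S}(x_{k+1}^{n-k},z^n)=\frac1{n-2k}\sum_{t=k+1}^{n-k}\Lambda(x_t,\sigma_t(z_t))$ and $\tilde L_{\mathbf S}(z^n)=\frac1{n-2k}\sum_{t=k+1}^{n-k}\ell(z_t,\sigma_t)$, and let $D_{k,m}(x^n,z^n)=\min_{\mathbf S\in\mathcal S^n_{k,m}(z^n)}L_{\mathbf S}(x_{k+1}^{n-k},z^n)$. *)

theory Defs
  imports Complex_Main "HOL-Library.FuncSet"
begin

text \<open>Sequences are indexed 1..n (as in the paper). Deterministic input x^n is a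
function nat => 'x (only values at 1..n matter). Output sequences z^n range over
the extensional function space on {1..n}.\<close>

definition seqs :: "nat \<Rightarrow> (nat \<Rightarrow> 'z) set" where
  "seqs n = PiE {1..n} (\<lambda>_. UNIV)"

text \<open>Probability of an event for the channel output Z^n, given input x^n
(independent components, Pr(Z_t = z) = Ch (x t) z).\<close>
definition chan_prob :: "('x \<Rightarrow> 'z \<Rightarrow> real) \<Rightarrow> nat \<Rightarrow> (nat \<Rightarrow> 'x) \<Rightarrow> ((nat \<Rightarrow> 'z) \<Rightarrow> bool) \<Rightarrow> real" where
  "chan_prob Ch n x E = (\<Sum>z\<in>seqs n. if E z then (\<Prod>t\<in>{1..n}. Ch (x t) (z t)) else 0)"

definition ctx :: "nat \<Rightarrow> (nat \<Rightarrow> 'z) \<Rightarrow> nat \<Rightarrow> 'z list \<times> 'z list" where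
  "ctx k z t = (map z [t-k..<t], map z [Suc t..<t+k+1])"

definition Tset :: "nat \<Rightarrow> nat \<Rightarrow> (nat \<Rightarrow> 'z) \<Rightarrow> 'z list \<times> 'z list \<Rightarrow> nat set" where
  "Tset k n z c = {t \<in> {k+1..n-k}. ctx k z t = c}"

definition switches :: "(nat \<Rightarrow> 's) \<Rightarrow> nat set \<Rightarrow> nat" where
  "switches \<sigma> T = card {j. Suc j < card T \<and>
      \<sigma> (sorted_list_of_set T ! j) \<noteq> \<sigma> (sorted_list_of_set T ! Suc j)}"

definition Sadm :: "nat \<Rightarrow> nat \<Rightarrow> nat \<Rightarrow> (nat \<Rightarrow> 'z) \<Rightarrow> (nat \<Rightarrow> 'z \<Rightarrow> 'xh) set" where
  "Sadm k m n z = {\<sigma> \<in> PiE {k+1..n-k} (\<lambda>_. UNIV). \<forall>c. switches \<sigma> (Tset k n z c) \<le> m}"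

definition Lemp :: "('x \<Rightarrow> 'xh \<Rightarrow> real) \<Rightarrow> nat \<Rightarrow> nat \<Rightarrow> (nat \<Rightarrow> 'x) \<Rightarrow> (nat \<Rightarrow> 'z) \<Rightarrow> (nat \<Rightarrow> 'z \<Rightarrow> 'xh) \<Rightarrow> real" where
  "Lemp \<Lambda> k n x z \<sigma> = (1 / real (n - 2*k)) * (\<Sum>t\<in>{k+1..n-k}. \<Lambda> (x t) (\<sigma> t (z t)))"

definition rho :: "('x \<Rightarrow> 'xh \<Rightarrow> real) \<Rightarrow> ('x \<Rightarrow> 'z::finite \<Rightarrow> real) \<Rightarrow> 'x \<Rightarrow> ('z \<Rightarrow> 'xh) \<Rightarrow> real" where
  "rho \<Lambda> Ch a s = (\<Sum>z\<in>UNIV. \<Lambda> a (s z) * Ch a z)"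

definition ell :: "('x::finite \<Rightarrow> 'xh \<Rightarrow> real) \<Rightarrow> ('x \<Rightarrow> 'z::finite \<Rightarrow> real) \<Rightarrow> ('z \<Rightarrow> 'x \<Rightarrow> real) \<Rightarrow> 'z \<Rightarrow> ('z \<Rightarrow> 'xh) \<Rightarrow> real" where
  "ell \<Lambda> Ch H z s = (\<Sum>a\<in>UNIV. H z a * rho \<Lambda> Ch a s)"

definition Ltil :: "('x::finite \<Rightarrow> 'xh \<Rightarrow> real) \<Rightarrow> ('x \<Rightarrow> 'z::finite \<Rightarrow> real) \<Rightarrow> ('z \<Rightarrow> 'x \<Rightarrow> real) \<Rightarrow> nat \<Rightarrow> nat \<Rightarrow> (nat \<Rightarrow> 'z) \<Rightarrow> (nat \<Rightarrow> 'z \<Rightarrow> 'xh) \<Rightarrow> real" where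
  "Ltil \<Lambda> Ch H k n z \<sigma> = (1 / real (n - 2*k)) * (\<Sum>t\<in>{k+1..n-k}. ell \<Lambda> Ch H (z t) (\<sigma> t))"

definition Dkm :: "('x \<Rightarrow> 'xh \<Rightarrow> real) \<Rightarrow> nat \<Rightarrow> nat \<Rightarrow> nat \<Rightarrow> (nat \<Rightarrow> 'x) \<Rightarrow> (nat \<Rightarrow> 'z) \<Rightarrow> real" where
  "Dkm \<Lambda> k m n x z = Min ((\<lambda>\<sigma>. Lemp \<Lambda> k n x z \<sigma>) ` Sadm k m n z)"

definition Lam_max :: "('x::finite \<Rightarrow> 'xh::finite \<Rightarrow> real) \<Rightarrow> real" where
  "Lam_max \<Lambda> = Max {\<Lambda> a b | a b. True}"

definition ell_max :: "('x::finite \<Rightarrow> 'xh::finite \<Rightarrow> real) \<Rightarrow> ('x \<Rightarrow> 'z::finite \<Rightarrow> real) \<Rightarrow> ('z \<Rightarrow> 'x \<Rightarrow> real) \<Rightarrow> real" where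
  "ell_max \<Lambda> Ch H = Max {ell \<Lambda> Ch H z s | z s. True} - Min {ell \<Lambda> Ch H z s | z s. True}"

definition L_max where
  "L_max \<Lambda> Ch H = Lam_max \<Lambda> + ell_max \<Lambda> Ch H"

definition bin_entropy :: "real \<Rightarrow> real" where
  "bin_entropy p = - p * ln p - (1 - p) * ln (1 - p)"

end

theory Submission
  imports Defs "HOL-Probability.Hoeffding"
begin

text \<open>The deviation between the true and the estimated loss of a tuple \<open>\<sigma>\<close> is a sum of
  independent, zero-mean (since \<open>\<Pi> H = I\<close> makes \<open>\<ell>\<close> unbiased) and bounded terms, and the excess
  loss of the minimiser of the estimated loss exceeds \<open>\<epsilon>\<close> only if some admissible \<open>\<sigma>\<close> deviates by
  more than \<open>\<epsilon>/2\<close>. Split the positions into the \<open>k + 1\<close> residue classes modulo \<open>k + 1\<close>. The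
  contexts of the positions of one class only depend on the outputs outside the class; conditionally
  on those, the restrictions of admissible tuples to the class have at most \<open>m\<close> switches along each
  of the at most \<open>|Z|\<^sup>2\<^sup>k\<close> contexts, so there are at most
  \<open>exp (|Z|\<^sup>2\<^sup>k ((n - 2k) h (m/(n - 2k)) + (m + 1) ln N))\<close> of them, and Hoeffding's inequality
  bounds the deviation of each. A union bound over these restrictions and over the classes, with
  thresholds proportional to the square roots of the class sizes, gives the theorem.\<close>

section \<open>Hoeffding's inequality for finite product distributions\<close>

lemma hoeffding_two_point_bound:
  fixes a b l :: real
  assumes "a \<le> 0" "0 \<le> b" "a < b" "0 < l"
  shows "(b * exp (l * a) - a * exp (l * b)) / (b - a) \<le> exp (l\<^sup>2 * (b - a)\<^sup>2 / 8)"
proof -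
  define p where "p = -a / (b - a)"
  define z where "z = l * (b - a)"
  have z: "z > 0" using assms by (simp add: z_def)
  have p: "p \<ge> 0" using assms by (simp add: p_def divide_nonpos_pos)
  have pos: "1 + p * (exp z - 1) > 0"
    using z p by (simp add: add_pos_nonneg)
  have zp: "-z * p = l * a" using assms by (simp add: z_def p_def field_simps)
  have ez: "exp (l * a) * exp z = exp (l * b)" by (simp add: z_def algebra_simps flip: exp_add)
  have "(b * exp (l * a) - a * exp (l * b)) / (b - a) = exp (l * a) + p * (exp (l * b) - exp (l * a))"
    using assms by (simp add: p_def field_simps)
  also have "\<dots> = exp (-z * p) * (1 + p * (exp z - 1))"
    unfolding zp ez[symmetric] by (simp add: algebra_simps)
  also have "\<dots> = exp (-z * p + ln (1 + p * (exp z - 1)))"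
    using pos by (simp add: exp_add exp_diff exp_minus field_simps)
  also have "\<dots> \<le> exp (z\<^sup>2 / 8)"
    using Hoeffdings_lemma_aux[of z p] z p by simp
  finally show ?thesis
    by (simp add: z_def power_mult_distrib)
qed

lemma sum_weighted_exp_le_hoeffding:
  fixes w Y :: "'v \<Rightarrow> real"
  assumes "finite V" and w_nonneg: "\<And>v. v \<in> V \<Longrightarrow> w v \<ge> 0" and w_sum: "(\<Sum>v\<in>V. w v) = 1"
    and mean_0: "(\<Sum>v\<in>V. w v * Y v) = 0"
    and Y_bounds: "\<And>v. v \<in> V \<Longrightarrow> a \<le> Y v \<and> Y v \<le> b" and "l > 0"
  shows "(\<Sum>v\<in>V. w v * exp (l * Y v)) \<le> exp (l\<^sup>2 * (b - a)\<^sup>2 / 8)"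
proof -
  have "a = (\<Sum>v\<in>V. w v * a)" using w_sum by (simp flip: sum_distrib_right)
  also have "\<dots> \<le> 0" unfolding mean_0[symmetric]
    using Y_bounds w_nonneg by (intro sum_mono mult_left_mono) auto
  finally have a: "a \<le> 0" .
  have "0 \<le> (\<Sum>v\<in>V. w v * b)" unfolding mean_0[symmetric]
    using Y_bounds w_nonneg by (intro sum_mono mult_left_mono) auto
  also have "\<dots> = b" using w_sum by (simp flip: sum_distrib_right)
  finally have b: "0 \<le> b" .
  show ?thesis
  proof (cases "a = b")
    case True
    then have "\<And>v. v \<in> V \<Longrightarrow> Y v = 0" using Y_bounds a b by force
    then show ?thesis using w_sum by simp
  next
    case False
    then have "a < b" using a b by simp
    have chord: "exp (l * Y v) \<le> (b - Y v) / (b - a) * exp (l * a) + (Y v - a) / (b - a) * exp (l * b)"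
      if v: "v \<in> V" for v
    proof -
      define y where "y = (b - Y v) / (b - a)"
      have y: "0 \<le> y" "y \<le> 1" using Y_bounds[OF v] \<open>a < b\<close> by (auto simp: y_def)
      have "exp (l * ((1 - y) *\<^sub>R b + y *\<^sub>R a)) \<le> (1 - y) * exp (l * b) + y * exp (l * a)"
        using y \<open>l > 0\<close> by (intro convex_onD[OF convex_on_exp]) auto
      moreover have "(1 - y) *\<^sub>R b + y *\<^sub>R a = Y v"
        using \<open>a < b\<close> by (simp add: y_def divide_simps) (simp add: algebra_simps)
      moreover have "1 - y = (Y v - a) / (b - a)"
        using \<open>a < b\<close> by (simp add: y_def field_simps)
      ultimately show ?thesis by (simp add: y_def)
    qed
    have "(\<Sum>v\<in>V. w v * exp (l * Y v))
        \<le> (\<Sum>v\<in>V. w v * ((b - Y v) / (b - a) * exp (l * a) + (Y v - a) / (b - a) * exp (l * b)))"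
      using chord w_nonneg by (intro sum_mono mult_left_mono) auto
    also have "\<dots> = ((\<Sum>v\<in>V. w v) * b - (\<Sum>v\<in>V. w v * Y v)) / (b - a) * exp (l * a)
        + ((\<Sum>v\<in>V. w v * Y v) - (\<Sum>v\<in>V. w v) * a) / (b - a) * exp (l * b)"
      by (simp add: sum_distrib_left sum_distrib_right sum_subtractf sum_divide_distrib
          algebra_simps diff_divide_distrib add_divide_distrib sum.distrib)
    also have "\<dots> = (b * exp (l * a) - a * exp (l * b)) / (b - a)"
      unfolding w_sum mean_0 using \<open>a < b\<close>
      by (simp add: mult.commute flip: diff_divide_distrib add_divide_distrib)
    also have "\<dots> \<le> exp (l\<^sup>2 * (b - a)\<^sup>2 / 8)"
      by (rule hoeffding_two_point_bound) (use a b \<open>a < b\<close> \<open>l > 0\<close> in auto)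
    finally show ?thesis .
  qed
qed

definition prod_prob :: "nat set \<Rightarrow> (nat \<Rightarrow> 'v \<Rightarrow> real) \<Rightarrow> ((nat \<Rightarrow> 'v) \<Rightarrow> bool) \<Rightarrow> real" where
  "prod_prob A w E = (\<Sum>z\<in>PiE A (\<lambda>_. UNIV). if E z then (\<Prod>t\<in>A. w t (z t)) else 0)"

lemma chan_prob_eq_prod_prob: "chan_prob Ch n x E = prod_prob {1..n} (\<lambda>t. Ch (x t)) E"
  unfolding chan_prob_def prod_prob_def seqs_def ..

lemma sum_prod_PiE_eq_1:
  fixes w :: "nat \<Rightarrow> 'v::finite \<Rightarrow> real"
  assumes "finite B" "\<And>t. t \<in> B \<Longrightarrow> (\<Sum>v\<in>UNIV. w t v) = 1"
  shows "(\<Sum>z\<in>PiE B (\<lambda>_. UNIV). \<Prod>t\<in>B. w t (z t)) = 1"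
  using assms by (simp flip: prod_sum_PiE)

lemma prod_prob_le_1:
  fixes w :: "nat \<Rightarrow> 'v::finite \<Rightarrow> real"
  assumes "finite A" "\<And>t v. t \<in> A \<Longrightarrow> w t v \<ge> 0" "\<And>t. t \<in> A \<Longrightarrow> (\<Sum>v\<in>UNIV. w t v) = 1"
  shows "prod_prob A w E \<le> 1"
proof -
  have "prod_prob A w E \<le> (\<Sum>z\<in>PiE A (\<lambda>_. UNIV). \<Prod>t\<in>A. w t (z t))"
    unfolding prod_prob_def using assms(2) by (intro sum_mono) (auto intro: prod_nonneg)
  then show ?thesis using sum_prod_PiE_eq_1[OF assms(1,3)] by simp
qed

lemma prod_prob_union_bound:
  fixes w :: "nat \<Rightarrow> 'v::finite \<Rightarrow> real"
  assumes "finite A" "finite G" and w_nonneg: "\<And>t v. t \<in> A \<Longrightarrow> w t v \<ge> 0"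
    and cover: "\<And>z. z \<in> PiE A (\<lambda>_. UNIV) \<Longrightarrow> E z \<Longrightarrow> \<exists>g\<in>G. P g z"
  shows "prod_prob A w E \<le> (\<Sum>g\<in>G. prod_prob A w (P g))"
  unfolding prod_prob_def
proof (subst sum.swap, intro sum_mono)
  fix z :: "nat \<Rightarrow> 'v" assume z: "z \<in> PiE A (\<lambda>_. UNIV)"
  have p: "(\<Prod>t\<in>A. w t (z t)) \<ge> 0" using w_nonneg by (intro prod_nonneg) auto
  show "(if E z then \<Prod>t\<in>A. w t (z t) else 0) \<le> (\<Sum>g\<in>G. if P g z then \<Prod>t\<in>A. w t (z t) else 0)"
  proof (cases "E z")
    case True
    then obtain g where "g \<in> G" "P g z" using cover z by blast
    then have "(if P g z then \<Prod>t\<in>A. w t (z t) else 0) \<le> (\<Sum>g\<in>G. if P g z then \<Prod>t\<in>A. w t (z t) else 0)"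
      using p \<open>finite G\<close> by (intro member_le_sum) auto
    then show ?thesis using True \<open>P g z\<close> by simp
  qed (use p in \<open>auto intro!: sum_nonneg\<close>)
qed

lemma prod_prob_mono:
  fixes w :: "nat \<Rightarrow> 'v::finite \<Rightarrow> real"
  assumes "finite A" "\<And>t v. t \<in> A \<Longrightarrow> w t v \<ge> 0"
    and "\<And>z. z \<in> PiE A (\<lambda>_. UNIV) \<Longrightarrow> E z \<Longrightarrow> F z"
  shows "prod_prob A w E \<le> prod_prob A w F"
  using prod_prob_union_bound[of A "{()}" w E "\<lambda>_. F"] assms by simp

lemma prod_prob_sum_gt_le_chernoff:
  fixes w Y :: "nat \<Rightarrow> 'v::finite \<Rightarrow> real"
  assumes "finite A" and w_nonneg: "\<And>t v. t \<in> A \<Longrightarrow> w t v \<ge> 0" and "l > 0"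
  shows "prod_prob A w (\<lambda>z. (\<Sum>t\<in>A. Y t (z t)) > a)
    \<le> exp (- l * a) * (\<Prod>t\<in>A. \<Sum>v\<in>UNIV. w t v * exp (l * Y t v))"
proof -
  have "prod_prob A w (\<lambda>z. (\<Sum>t\<in>A. Y t (z t)) > a) \<le>
        (\<Sum>z\<in>PiE A (\<lambda>_. UNIV). (\<Prod>t\<in>A. w t (z t)) * exp (l * ((\<Sum>t\<in>A. Y t (z t)) - a)))"
    unfolding prod_prob_def
  proof (intro sum_mono)
    fix z :: "nat \<Rightarrow> 'v"
    have "(\<Prod>t\<in>A. w t (z t)) \<ge> 0" using w_nonneg by (intro prod_nonneg) auto
    moreover have "(\<Sum>t\<in>A. Y t (z t)) > a \<Longrightarrow> exp (l * ((\<Sum>t\<in>A. Y t (z t)) - a)) \<ge> 1"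
      using \<open>l > 0\<close> by simp
    ultimately show "(if (\<Sum>t\<in>A. Y t (z t)) > a then \<Prod>t\<in>A. w t (z t) else 0)
          \<le> (\<Prod>t\<in>A. w t (z t)) * exp (l * ((\<Sum>t\<in>A. Y t (z t)) - a))"
      by (auto simp: mult_le_cancel_left1)
  qed
  also have "\<dots> = exp (- l * a) * (\<Sum>z\<in>PiE A (\<lambda>_. UNIV). \<Prod>t\<in>A. w t (z t) * exp (l * Y t (z t)))"
  proof -
    have "exp (l * ((\<Sum>t\<in>A. Y t (z t)) - a)) = exp (- l * a) * exp (\<Sum>t\<in>A. l * Y t (z t))"
      for z :: "nat \<Rightarrow> 'v"
      by (simp add: algebra_simps flip: sum_distrib_left exp_add)
    then show ?thesis
      using \<open>finite A\<close> by (simp add: exp_sum sum_distrib_left prod.distrib mult.left_commute)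
  qed
  also have "(\<Sum>z\<in>PiE A (\<lambda>_. UNIV). \<Prod>t\<in>A. w t (z t) * exp (l * Y t (z t)))
      = (\<Prod>t\<in>A. \<Sum>v\<in>UNIV. w t v * exp (l * Y t v))"
    by (rule prod_sum_PiE[symmetric]) (use \<open>finite A\<close> in auto)
  finally show ?thesis .
qed

lemma prod_prob_sum_gt_le:
  fixes w Y :: "nat \<Rightarrow> 'v::finite \<Rightarrow> real"
  assumes A: "finite A" "A \<noteq> {}"
    and w_nonneg: "\<And>t v. t \<in> A \<Longrightarrow> w t v \<ge> 0" and w_sum: "\<And>t. t \<in> A \<Longrightarrow> (\<Sum>v\<in>UNIV. w t v) = 1"
    and mean_0: "\<And>t. t \<in> A \<Longrightarrow> (\<Sum>v\<in>UNIV. w t v * Y t v) = 0"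
    and Y_bounds: "\<And>t v. t \<in> A \<Longrightarrow> c t \<le> Y t v \<and> Y t v \<le> c t + L"
    and "L > 0" "a > 0"
  shows "prod_prob A w (\<lambda>z. (\<Sum>t\<in>A. Y t (z t)) > a) \<le> exp (- 2 * a\<^sup>2 / (real (card A) * L\<^sup>2))"
proof -
  define n where "n = real (card A)"
  have "n > 0" using A by (simp add: n_def card_gt_0_iff)
  define l where "l = 4 * a / (n * L\<^sup>2)"
  have "l > 0" using \<open>n > 0\<close> \<open>L > 0\<close> \<open>a > 0\<close> by (simp add: l_def)
  have "prod_prob A w (\<lambda>z. (\<Sum>t\<in>A. Y t (z t)) > a)
      \<le> exp (- l * a) * (\<Prod>t\<in>A. \<Sum>v\<in>UNIV. w t v * exp (l * Y t v))"
    by (rule prod_prob_sum_gt_le_chernoff[OF A(1) w_nonneg \<open>l > 0\<close>])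
  also have "(\<Prod>t\<in>A. \<Sum>v\<in>UNIV. w t v * exp (l * Y t v)) \<le> (\<Prod>t\<in>A. exp (l\<^sup>2 * L\<^sup>2 / 8))"
  proof (intro prod_mono conjI)
    fix t assume t: "t \<in> A"
    show "0 \<le> (\<Sum>v\<in>UNIV. w t v * exp (l * Y t v))" using w_nonneg t by (intro sum_nonneg) auto
    have "(\<Sum>v\<in>UNIV. w t v * exp (l * Y t v)) \<le> exp (l\<^sup>2 * ((c t + L) - c t)\<^sup>2 / 8)"
      by (rule sum_weighted_exp_le_hoeffding) (use w_nonneg w_sum mean_0 Y_bounds t \<open>l > 0\<close> in auto)
    then show "(\<Sum>v\<in>UNIV. w t v * exp (l * Y t v)) \<le> exp (l\<^sup>2 * L\<^sup>2 / 8)" by simp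
  qed
  also have "(\<Prod>t\<in>A. exp (l\<^sup>2 * L\<^sup>2 / 8)) = exp (n * (l\<^sup>2 * L\<^sup>2 / 8))"
    by (simp add: n_def flip: exp_of_nat_mult)
  also have "exp (- l * a) * \<dots> = exp (- 2 * a\<^sup>2 / (n * L\<^sup>2))"
    using \<open>n > 0\<close> \<open>L > 0\<close> by (simp add: l_def field_simps power2_eq_square flip: exp_add)
  finally show ?thesis by (simp add: n_def)
qed

lemma prod_prob_abs_sum_gt_le:
  fixes w Y :: "nat \<Rightarrow> 'v::finite \<Rightarrow> real"
  assumes A: "finite A" "A \<noteq> {}"
    and w_nonneg: "\<And>t v. t \<in> A \<Longrightarrow> w t v \<ge> 0" and w_sum: "\<And>t. t \<in> A \<Longrightarrow> (\<Sum>v\<in>UNIV. w t v) = 1"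
    and mean_0: "\<And>t. t \<in> A \<Longrightarrow> (\<Sum>v\<in>UNIV. w t v * Y t v) = 0"
    and Y_bounds: "\<And>t v. t \<in> A \<Longrightarrow> c t \<le> Y t v \<and> Y t v \<le> c t + L"
    and L: "L > 0" and a: "a > 0"
  shows "prod_prob A w (\<lambda>z. \<bar>\<Sum>t\<in>A. Y t (z t)\<bar> > a) \<le> 2 * exp (- 2 * a\<^sup>2 / (real (card A) * L\<^sup>2))"
proof -
  let ?P = "\<lambda>b::bool. \<lambda>z. (\<Sum>t\<in>A. (if b then Y t (z t) else - Y t (z t))) > a"
  have "prod_prob A w (\<lambda>z. \<bar>\<Sum>t\<in>A. Y t (z t)\<bar> > a) \<le> (\<Sum>b\<in>UNIV. prod_prob A w (?P b))"
  proof (rule prod_prob_union_bound)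
    fix z :: "nat \<Rightarrow> 'v" assume "\<bar>\<Sum>t\<in>A. Y t (z t)\<bar> > a"
    then have "?P True z \<or> ?P False z" by (auto simp: sum_negf abs_if split: if_splits)
    then show "\<exists>b\<in>UNIV. ?P b z" by blast
  qed (use A w_nonneg in auto)
  also have "\<dots> = prod_prob A w (?P True) + prod_prob A w (?P False)"
    by (simp add: UNIV_bool)
  also have "prod_prob A w (?P True) \<le> exp (- 2 * a\<^sup>2 / (real (card A) * L\<^sup>2))"
    using prod_prob_sum_gt_le[OF A w_nonneg w_sum mean_0 Y_bounds L a] by simp
  also have "prod_prob A w (?P False) \<le> exp (- 2 * a\<^sup>2 / (real (card A) * L\<^sup>2))"
  proof -
    have "prod_prob A w (\<lambda>z. (\<Sum>t\<in>A. - Y t (z t)) > a) \<le> exp (- 2 * a\<^sup>2 / (real (card A) * L\<^sup>2))"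
    proof (rule prod_prob_sum_gt_le[OF A w_nonneg w_sum _ _ L a, where c = "\<lambda>t. - c t - L"])
      fix t v assume "t \<in> A"
      then show "(\<Sum>v\<in>UNIV. w t v * - Y t v) = 0" "- c t - L \<le> - Y t v \<and> - Y t v \<le> - c t - L + L"
        using mean_0 Y_bounds[of t v] by (auto simp: sum_negf)
    qed
    then show ?thesis by simp
  qed
  finally show ?thesis by simp
qed

lemma prod_prob_split:
  fixes w :: "nat \<Rightarrow> 'v::finite \<Rightarrow> real"
  assumes "finite I" "A \<subseteq> I"
  shows "prod_prob I w E = (\<Sum>zB\<in>PiE (I - A) (\<lambda>_. UNIV). (\<Prod>t\<in>I - A. w t (zB t)) *
            prod_prob A w (\<lambda>zA. E (override_on zB zA A)))"
proof -
  have bij: "bij_betw (\<lambda>p. override_on (fst p) (snd p) A) (PiE (I - A) (\<lambda>_. UNIV) \<times> PiE A (\<lambda>_. UNIV)) (PiE I (\<lambda>_. UNIV))"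
  proof (rule bij_betwI[where g = "\<lambda>z. (restrict z (I - A), restrict z A)"])
    show "(\<lambda>p. override_on (fst p) (snd p) A) \<in> PiE (I - A) (\<lambda>_. UNIV) \<times> PiE A (\<lambda>_. UNIV) \<rightarrow> PiE I (\<lambda>_. UNIV)"
      using assms by (auto simp: override_on_def PiE_def extensional_def)
  qed (use assms in \<open>auto simp: override_on_def PiE_def extensional_def fun_eq_iff\<close>)
  have prod_override_on: "(\<Prod>t\<in>I. w t (override_on zB zA A t)) = (\<Prod>t\<in>A. w t (zA t)) * (\<Prod>t\<in>I - A. w t (zB t))"
    for zA zB :: "nat \<Rightarrow> 'v"
  proof -
    have "(\<Prod>t\<in>I. w t (override_on zB zA A t))
        = (\<Prod>t\<in>A. w t (override_on zB zA A t)) * (\<Prod>t\<in>I - A. w t (override_on zB zA A t))"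
      using assms by (metis mult.commute prod.subset_diff)
    then show ?thesis by (simp add: override_on_def)
  qed
  have "prod_prob I w E = (\<Sum>(zB, zA)\<in>PiE (I - A) (\<lambda>_. UNIV) \<times> PiE A (\<lambda>_. UNIV).
          if E (override_on zB zA A) then \<Prod>t\<in>I. w t (override_on zB zA A t) else 0)"
    unfolding prod_prob_def sum.reindex_bij_betw[OF bij, symmetric] by (simp add: case_prod_beta)
  also have "\<dots> = (\<Sum>zB\<in>PiE (I - A) (\<lambda>_. UNIV). (\<Prod>t\<in>I - A. w t (zB t)) *
            prod_prob A w (\<lambda>zA. E (override_on zB zA A)))"
    unfolding sum.cartesian_product[symmetric] prod_prob_def prod_override_on
    by (auto simp: sum_distrib_left mult.commute intro!: sum.cong)
  finally show ?thesis .
qed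

lemma prod_prob_le_if_conditional_le:
  fixes w :: "nat \<Rightarrow> 'v::finite \<Rightarrow> real"
  assumes "finite I" "A \<subseteq> I" and w_nonneg: "\<And>t v. t \<in> I \<Longrightarrow> w t v \<ge> 0"
    and w_sum: "\<And>t. t \<in> I \<Longrightarrow> (\<Sum>v\<in>UNIV. w t v) = 1"
    and cond_le: "\<And>zB. zB \<in> PiE (I - A) (\<lambda>_. UNIV) \<Longrightarrow> prod_prob A w (\<lambda>zA. E (override_on zB zA A)) \<le> B"
  shows "prod_prob I w E \<le> B"
proof -
  have "prod_prob I w E \<le> (\<Sum>zB\<in>PiE (I - A) (\<lambda>_. UNIV). (\<Prod>t\<in>I - A. w t (zB t)) * B)"
    unfolding prod_prob_split[OF assms(1,2)] using cond_le w_nonneg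
    by (intro sum_mono mult_left_mono prod_nonneg) auto
  also have "\<dots> = B"
    using sum_prod_PiE_eq_1[of "I - A" w] assms(1) w_sum by (simp flip: sum_distrib_right)
  finally show ?thesis .
qed

section \<open>Switch points\<close>

definition switch_points :: "(nat \<Rightarrow> 's) \<Rightarrow> nat set \<Rightarrow> nat set" where
  "switch_points \<sigma> S = {t\<in>S. (\<exists>u\<in>S. u < t) \<and> \<sigma> t \<noteq> \<sigma> (Max {u\<in>S. u < t})}"

lemma switch_points_subset: "switch_points \<sigma> S \<subseteq> S"
  by (auto simp: switch_points_def)

lemma Max_less_in:
  fixes S :: "nat set"
  assumes "finite S" "\<exists>u\<in>S. u < t"
  shows "Max {u\<in>S. u < t} \<in> S" "Max {u\<in>S. u < t} < t"
proof -
  have "Max {u\<in>S. u < t} \<in> {u\<in>S. u < t}" by (rule Max_in) (use assms in auto)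
  then show "Max {u\<in>S. u < t} \<in> S" "Max {u\<in>S. u < t} < t" by auto
qed

lemma switch_points_cong:
  assumes "finite S" "\<And>t. t \<in> S \<Longrightarrow> f t = g t"
  shows "switch_points f S = switch_points g S"
proof -
  have "f (Max {u\<in>S. u < t}) = g (Max {u\<in>S. u < t})" if "\<exists>u\<in>S. u < t" for t
    using Max_less_in(1)[OF assms(1) that] assms(2) by simp
  then show ?thesis using assms(2) by (fastforce simp: switch_points_def)
qed

lemma switches_eq_card_switch_points:
  assumes "finite S"
  shows "switches \<sigma> S = card (switch_points \<sigma> S)"
proof -
  define l where "l = sorted_list_of_set S"
  have len: "length l = card S" and set_l: "set l = S" and sorted: "sorted_wrt (<) l"
    using assms by (auto simp: l_def)
  have less_iff: "l ! i < l ! j \<longleftrightarrow> i < j" if "i < length l" "j < length l" for i j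
    using sorted_wrt_nth_less[OF sorted, of i j] sorted_wrt_nth_less[OF sorted, of j i] that
    by (metis less_asym nat_neq_iff)
  have pred: "Max {u\<in>S. u < l ! Suc j} = l ! j" if "Suc j < length l" for j
  proof (rule Max_eqI)
    show "l ! j \<in> {u\<in>S. u < l ! Suc j}" using that less_iff[of j "Suc j"] set_l by auto
    fix u assume "u \<in> {u\<in>S. u < l ! Suc j}"
    then obtain i where i: "i < length l" "u = l ! i" "u < l ! Suc j"
      using set_l by (auto simp: in_set_conv_nth)
    then have "i \<le> j" using less_iff[of i "Suc j"] that by auto
    then show "u \<le> l ! j" using i less_iff[of j i] that by (cases "i = j") auto
  qed (use assms in simp)
  define Js where "Js = {j. Suc j < card S \<and> \<sigma> (l ! j) \<noteq> \<sigma> (l ! Suc j)}"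
  have "switch_points \<sigma> S = (\<lambda>j. l ! Suc j) ` Js"
  proof (intro equalityI subsetI)
    fix t assume t: "t \<in> switch_points \<sigma> S"
    then obtain i where i: "i < length l" "t = l ! i" using set_l by (auto simp: switch_points_def in_set_conv_nth)
    from t obtain u where "u \<in> S" "u < t" by (auto simp: switch_points_def)
    then obtain i' where "i' < length l" "u = l ! i'" using set_l by (auto simp: in_set_conv_nth)
    then obtain j where j: "i = Suc j" using less_iff i \<open>u < t\<close> by (metis less_nat_zero_code not0_implies_Suc)
    have "\<sigma> (l ! j) \<noteq> \<sigma> (l ! Suc j)" using t pred[of j] i j by (auto simp: switch_points_def)
    then show "t \<in> (\<lambda>j. l ! Suc j) ` Js" using i j len by (auto simp: Js_def)
  next
    fix t assume "t \<in> (\<lambda>j. l ! Suc j) ` Js"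
    then obtain j where j: "Suc j < length l" "t = l ! Suc j" "\<sigma> (l ! j) \<noteq> \<sigma> (l ! Suc j)"
      using len by (auto simp: Js_def)
    then have "l ! j \<in> S" "l ! j < t" "t \<in> S" using set_l less_iff[of j "Suc j"] by auto
    then show "t \<in> switch_points \<sigma> S" using pred[of j] j by (auto simp: switch_points_def)
  qed
  moreover have "inj_on (\<lambda>j. l ! Suc j) Js"
  proof (rule linorder_inj_onI')
    fix i j assume "i \<in> Js" "j \<in> Js" "i < j"
    then show "l ! Suc i \<noteq> l ! Suc j" using less_iff[of "Suc i" "Suc j"] len by (auto simp: Js_def)
  qed
  ultimately show ?thesis by (simp add: switches_def Js_def l_def card_image)
qed

text \<open>Passing to a subset of positions cannot create switches: each switch of the subset
  is witnessed by the first switch of the whole set after the preceding position of the subset.\<close>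

lemma card_switch_points_subset_le:
  assumes "finite S" "S' \<subseteq> S"
  shows "card (switch_points \<sigma> S') \<le> card (switch_points \<sigma> S)"
proof -
  have "finite S'" using assms finite_subset by blast
  define p where "p = (\<lambda>t. Max {u\<in>S'. u < t})"
  define \<phi> where "\<phi> = (\<lambda>t. Min {u\<in>S. p t < u \<and> u \<le> t \<and> \<sigma> u \<noteq> \<sigma> (p t)})"
  have witness: "\<phi> t \<in> switch_points \<sigma> S \<and> p t < \<phi> t \<and> \<phi> t \<le> t" if t: "t \<in> switch_points \<sigma> S'" for t
  proof -
    have "t \<in> S'" "\<exists>u\<in>S'. u < t" "\<sigma> t \<noteq> \<sigma> (p t)"
      using t by (auto simp: switch_points_def p_def)
    then have pt: "p t \<in> S" "p t < t"
      using Max_less_in[OF \<open>finite S'\<close>] assms(2) by (auto simp: p_def)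
    define U where "U = {u\<in>S. p t < u \<and> u \<le> t \<and> \<sigma> u \<noteq> \<sigma> (p t)}"
    have "t \<in> U" "finite U"
      using \<open>t \<in> S'\<close> \<open>\<sigma> t \<noteq> \<sigma> (p t)\<close> pt assms by (auto simp: U_def)
    then have "Min U \<in> U" by (intro Min_in) auto
    then have u: "\<phi> t \<in> U" by (simp add: \<phi>_def U_def)
    have u_min: "\<phi> t \<le> v" if "v \<in> U" for v
      using Min_le[OF \<open>finite U\<close> that] by (simp add: \<phi>_def U_def)
    define q where "q = Max {v\<in>S. v < \<phi> t}"
    have q: "q \<in> S" "q < \<phi> t" "p t \<le> q"
      using Max_less_in[OF assms(1), of "\<phi> t"] Max_ge[of "{v\<in>S. v < \<phi> t}" "p t"] pt u assms(1)
      by (auto simp: q_def U_def)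
    have "\<sigma> q = \<sigma> (p t)"
    proof (rule ccontr)
      assume "\<sigma> q \<noteq> \<sigma> (p t)"
      then have "q \<in> U" using q u by (auto simp: U_def order_le_less)
      then show False using u_min q by fastforce
    qed
    then show ?thesis using u pt by (auto simp: switch_points_def q_def U_def)
  qed
  have "inj_on \<phi> (switch_points \<sigma> S')"
  proof (rule linorder_inj_onI')
    fix a b assume "a \<in> switch_points \<sigma> S'" "b \<in> switch_points \<sigma> S'" "a < b"
    then have "a \<le> p b"
      using Max_ge[of "{u\<in>S'. u < b}" a] \<open>finite S'\<close> by (auto simp: p_def switch_points_def)
    then show "\<phi> a \<noteq> \<phi> b"
      using witness[OF \<open>a \<in> switch_points \<sigma> S'\<close>] witness[OF \<open>b \<in> switch_points \<sigma> S'\<close>] by linarith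
  qed
  then have "card (switch_points \<sigma> S') = card (\<phi> ` switch_points \<sigma> S')" by (simp add: card_image)
  also have "\<dots> \<le> card (switch_points \<sigma> S)"
    using witness assms(1) by (intro card_mono) (auto intro: finite_subset[OF switch_points_subset])
  finally show ?thesis .
qed

section \<open>Counting maps with few switches\<close>

text \<open>Chernoff-type bound on the number of small subsets: compare with the
  binomial expansion of \<open>(p + (1 - p)) ^ card A = 1\<close>.\<close>

lemma card_small_subsets_le:
  assumes A: "finite A" "card A \<le> M" and p: "0 < p" "p \<le> 1/2"
  shows "real (card {J. J \<subseteq> A \<and> card J \<le> q}) \<le> exp (real q * ln ((1 - p) / p) - real M * ln (1 - p))"
proof -
  define JJ where "JJ = {J. J \<subseteq> A \<and> card J \<le> q}"
  define r where "r = p / (1 - p)"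
  have r: "0 < r" "r \<le> 1" and p1: "0 < 1 - p" "1 - p \<le> 1" using p by (auto simp: r_def field_simps)
  have "(1::real) = (\<Prod>a\<in>A. p + (1 - p))" by simp
  also have "\<dots> = (\<Sum>J\<in>Pow A. (\<Prod>a\<in>J. p) * (\<Prod>a\<in>A - J. 1 - p))"
    by (rule prod_add) (use A in auto)
  also have "\<dots> \<ge> (\<Sum>J\<in>JJ. (\<Prod>a\<in>J. p) * (\<Prod>a\<in>A - J. 1 - p))"
    by (rule sum_mono2) (use A p in \<open>auto simp: JJ_def\<close>)
  also have "(\<Sum>J\<in>JJ. (\<Prod>a\<in>J. p) * (\<Prod>a\<in>A - J. 1 - p)) \<ge> (\<Sum>J\<in>JJ. r ^ q * (1 - p) ^ M)"
  proof (rule sum_mono)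
    fix J assume "J \<in> JJ"
    then have J: "J \<subseteq> A" "card J \<le> q" by (auto simp: JJ_def)
    then have "card J \<le> card A" "card (A - J) = card A - card J"
      using A by (auto simp: card_mono card_Diff_subset finite_subset)
    then have "(\<Prod>a\<in>J. p) * (\<Prod>a\<in>A - J. 1 - p) = r ^ card J * (1 - p) ^ card A"
      using p1 by (simp add: r_def power_divide power_diff field_simps)
    also have "\<dots> \<ge> r ^ q * (1 - p) ^ M"
      by (intro mult_mono power_decreasing) (use r p1 J A in auto)
    finally show "r ^ q * (1 - p) ^ M \<le> (\<Prod>a\<in>J. p) * (\<Prod>a\<in>A - J. 1 - p)" .
  qed
  finally have "real (card JJ) \<le> 1 / (r ^ q * (1 - p) ^ M)"
    using r p1 by (simp add: field_simps)
  also have "r ^ q * (1 - p) ^ M = exp (real q * ln r + real M * ln (1 - p))"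
    using r p1 by (simp add: exp_add ln_realpow[symmetric])
  also have "ln r = - ln ((1 - p) / p)" using p1 p by (simp add: r_def ln_div)
  finally show ?thesis by (simp add: JJ_def exp_minus[symmetric] exp_diff[symmetric] divide_inverse)
qed

lemma bin_entropy_nonneg:
  assumes "0 \<le> p" "p \<le> 1"
  shows "bin_entropy p \<ge> 0"
proof -
  have "p * ln p \<le> 0" "(1 - p) * ln (1 - p) \<le> 0"
    using assms by (cases "p = 0"; cases "p = 1"; auto intro!: mult_nonneg_nonpos)+
  then show ?thesis by (simp add: bin_entropy_def)
qed

lemma card_small_subsets_le_entropy:
  assumes A: "finite A" "card A \<le> M" and M: "0 < M" "2 * m \<le> M" and K: "1 \<le> K"
  shows "real (card {J. J \<subseteq> A \<and> card J \<le> K * m}) \<le> exp (real K * (real M * bin_entropy (real m / real M)))"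
proof (cases "m = 0")
  case True
  then have "{J. J \<subseteq> A \<and> card J \<le> K * m} = {{}}"
    using A by (auto dest: finite_subset)
  then show ?thesis using True by (simp add: bin_entropy_def)
next
  case False
  define p where "p = real m / real M"
  have p: "0 < p" "p \<le> 1/2" using False M by (auto simp: p_def field_simps)
  have "real (card {J. J \<subseteq> A \<and> card J \<le> K * m}) \<le> exp (real (K * m) * ln ((1 - p) / p) - real M * ln (1 - p))"
    by (rule card_small_subsets_le[OF A p])
  also have "\<dots> \<le> exp (real K * (real M * bin_entropy p))"
  proof -
    have "real M * p = real m" using M by (simp add: p_def)
    then have "real K * (real M * bin_entropy p) = real (K * m) * ln ((1 - p) / p) - real M * ln (1 - p)
        - (real K - 1) * real M * ln (1 - p)"
      using p by (simp add: bin_entropy_def ln_div algebra_simps flip: \<open>real M * p = real m\<close>)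
    moreover have "(real K - 1) * real M * ln (1 - p) \<le> 0"
      using K p by (intro mult_nonneg_nonpos) auto
    ultimately show ?thesis by simp
  qed
  finally show ?thesis by (simp add: p_def)
qed

definition bounded_switch_maps :: "nat set \<Rightarrow> (nat \<Rightarrow> 'c) \<Rightarrow> nat \<Rightarrow> (nat \<Rightarrow> 's) set" where
  "bounded_switch_maps A cf m =
    {g \<in> PiE A (\<lambda>_. UNIV). \<forall>c. card (switch_points g {t\<in>A. cf t = c}) \<le> m}"

definition class_switch_points :: "nat set \<Rightarrow> (nat \<Rightarrow> 'c) \<Rightarrow> (nat \<Rightarrow> 's) \<Rightarrow> nat set" where
  "class_switch_points A cf g = {t\<in>A. t \<in> switch_points g {u\<in>A. cf u = cf t}}"

definition class_heads :: "nat set \<Rightarrow> (nat \<Rightarrow> 'c) \<Rightarrow> nat set" where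
  "class_heads A cf = {t\<in>A. \<not> (\<exists>u\<in>A. u < t \<and> cf u = cf t)}"

lemma card_class_heads_le:
  assumes "finite Cs" "cf ` A \<subseteq> Cs"
  shows "card (class_heads A cf) \<le> card Cs"
proof -
  have "inj_on cf (class_heads A cf)"
    by (rule linorder_inj_onI') (auto simp: class_heads_def)
  then have "card (class_heads A cf) = card (cf ` class_heads A cf)" by (simp add: card_image)
  also have "\<dots> \<le> card Cs" using assms by (intro card_mono) (auto simp: class_heads_def)
  finally show ?thesis .
qed

lemma card_class_switch_points_le:
  assumes "finite Cs" "cf ` A \<subseteq> Cs" "g \<in> bounded_switch_maps A cf m"
  shows "card (class_switch_points A cf g) \<le> card Cs * m"
proof -
  have "class_switch_points A cf g = (\<Union>c\<in>Cs. switch_points g {t\<in>A. cf t = c})"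
    using switch_points_subset assms(2) by (fastforce simp: class_switch_points_def)
  then have "card (class_switch_points A cf g) \<le> (\<Sum>c\<in>Cs. card (switch_points g {t\<in>A. cf t = c}))"
    using card_UN_le[OF assms(1)] by simp
  also have "\<dots> \<le> (\<Sum>c\<in>Cs. m)"
    using assms(3) by (intro sum_mono) (auto simp: bounded_switch_maps_def)
  finally show ?thesis by simp
qed

text \<open>Off the switch points a map is constant along each class, so it is determined by its
  switch points together with its values there and at the first element of each class.\<close>

lemma eq_on_if_eq_on_class_switch_points_heads:
  assumes "finite A" "class_switch_points A cf g1 \<subseteq> J" "class_switch_points A cf g2 \<subseteq> J"
    and eq: "\<And>t. t \<in> J \<union> class_heads A cf \<Longrightarrow> g1 t = g2 t"
  shows "t \<in> A \<Longrightarrow> g1 t = g2 t"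
proof (induction t rule: less_induct)
  case (less t)
  show ?case
  proof (cases "t \<in> J \<union> class_heads A cf")
    case False
    define P where "P = {u\<in>A. cf u = cf t}"
    have "t \<in> P" "\<exists>u\<in>P. u < t" using less.prems False by (auto simp: class_heads_def P_def)
    moreover have "finite P" using assms(1) by (simp add: P_def)
    ultimately have pred: "Max {u\<in>P. u < t} \<in> A" "Max {u\<in>P. u < t} < t"
      using Max_less_in[of P t] by (auto simp: P_def)
    have "t \<notin> switch_points g1 P" "t \<notin> switch_points g2 P"
      using False less.prems assms(2,3) by (auto simp: class_switch_points_def P_def)
    then have "g1 t = g1 (Max {u\<in>P. u < t})" "g2 t = g2 (Max {u\<in>P. u < t})"
      using \<open>t \<in> P\<close> \<open>\<exists>u\<in>P. u < t\<close> by (auto simp: switch_points_def)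
    then show ?thesis using less.IH[OF pred(2,1)] by simp
  qed (use eq in blast)
qed

lemma card_bounded_switch_maps_le:
  assumes A: "finite A" and Cs: "finite Cs" "cf ` A \<subseteq> Cs" "card Cs \<le> K"
  shows "card (bounded_switch_maps A cf m :: (nat \<Rightarrow> 's::finite) set)
     \<le> card {J. J \<subseteq> A \<and> card J \<le> K * m} * CARD('s) ^ (K * (m + 1))"
proof -
  define G where "G = (bounded_switch_maps A cf m :: (nat \<Rightarrow> 's) set)"
  define F where "F = class_heads A cf"
  define JJ where "JJ = {J. J \<subseteq> A \<and> card J \<le> K * m}"
  define code :: "(nat \<Rightarrow> 's) \<Rightarrow> nat set \<times> (nat \<Rightarrow> 's)" where "code = (\<lambda>g. (class_switch_points A cf g, restrict g (class_switch_points A cf g \<union> F)))"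
  have "finite F" "card F \<le> K"
    using A card_class_heads_le[OF Cs(1,2)] Cs(3) by (auto simp: F_def class_heads_def)
  have "finite JJ" using A by (auto simp: JJ_def)
  have "class_switch_points A cf g \<in> JJ" if "g \<in> G" for g
  proof -
    have "card (class_switch_points A cf g) \<le> card Cs * m"
      using card_class_switch_points_le[OF Cs(1,2)] that by (simp add: G_def)
    also have "\<dots> \<le> K * m" using Cs(3) by simp
    finally show ?thesis by (auto simp: JJ_def class_switch_points_def)
  qed
  then have code_G: "code ` G \<subseteq> Sigma JJ (\<lambda>J. PiE (J \<union> F) (\<lambda>_. UNIV))"
    unfolding code_def by (intro image_subsetI SigmaI) simp_all
  have "inj_on code G"
  proof (rule inj_onI)
    fix g1 g2 assume g: "g1 \<in> G" "g2 \<in> G" "code g1 = code g2"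
    define J where "J = class_switch_points A cf g1"
    have J2: "class_switch_points A cf g2 = J" and "restrict g1 (J \<union> F) = restrict g2 (J \<union> F)"
      using g(3) by (auto simp: code_def J_def)
    then have "g1 t = g2 t" if "t \<in> J \<union> F" for t
      using that by (metis restrict_apply')
    then have "\<forall>t\<in>A. g1 t = g2 t"
      using eq_on_if_eq_on_class_switch_points_heads[OF A, of cf g1 J g2] J2 by (auto simp: J_def F_def)
    then show "g1 = g2" using g(1,2)
      by (auto simp: G_def bounded_switch_maps_def PiE_def extensional_def fun_eq_iff)
  qed
  have "finite (Sigma JJ (\<lambda>J. PiE (J \<union> F) (\<lambda>_. UNIV :: 's set)))"
    using \<open>finite JJ\<close> \<open>finite F\<close> A by (auto simp: JJ_def intro!: finite_SigmaI finite_PiE intro: finite_subset)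
  then have "card G \<le> card (Sigma JJ (\<lambda>J. PiE (J \<union> F) (\<lambda>_. UNIV :: 's set)))"
    using card_mono[OF _ code_G] card_image[OF \<open>inj_on code G\<close>] by simp
  also have "\<dots> = (\<Sum>J\<in>JJ. card (PiE (J \<union> F) (\<lambda>_. UNIV :: 's set)))"
    by (rule card_SigmaI) (use \<open>finite JJ\<close> \<open>finite F\<close> A in \<open>auto intro!: finite_PiE simp: JJ_def intro: finite_subset\<close>)
  also have "\<dots> = (\<Sum>J\<in>JJ. CARD('s) ^ card (J \<union> F))"
    using \<open>finite F\<close> A by (intro sum.cong) (auto simp: card_PiE JJ_def rev_finite_subset[OF A])
  also have "\<dots> \<le> (\<Sum>J\<in>JJ. CARD('s) ^ (K * (m + 1)))"
  proof (intro sum_mono power_increasing)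
    fix J assume "J \<in> JJ"
    then have "card (J \<union> F) \<le> K * m + K" using card_Un_le[of J F] \<open>card F \<le> K\<close> by (auto simp: JJ_def)
    then show "card (J \<union> F) \<le> K * (m + 1)" by simp
  qed simp
  finally show ?thesis by (simp add: G_def JJ_def)
qed

lemma card_bounded_switch_maps_le_exp:
  assumes A: "finite A" "card A \<le> M" and Cs: "finite Cs" "cf ` A \<subseteq> Cs" "card Cs \<le> K"
    and M: "0 < M" "2 * m \<le> M" and K: "1 \<le> K"
  shows "real (card (bounded_switch_maps A cf m :: (nat \<Rightarrow> 's::finite) set))
     \<le> exp (real K * (real M * bin_entropy (real m / real M) + (real m + 1) * ln (real CARD('s))))"
proof -
  have "real (card (bounded_switch_maps A cf m :: (nat \<Rightarrow> 's) set))
      \<le> real (card {J. J \<subseteq> A \<and> card J \<le> K * m}) * real CARD('s) ^ (K * (m + 1))"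
    using card_bounded_switch_maps_le[OF A(1) Cs, where m = m and 's = 's]
    by (simp flip: of_nat_mult of_nat_power)
  also have "\<dots> \<le> exp (real K * (real M * bin_entropy (real m / real M)))
      * exp (real K * ((real m + 1) * ln (real CARD('s))))"
  proof (intro mult_mono card_small_subsets_le_entropy[OF A M K])
    have "real CARD('s) ^ (K * (m + 1)) = exp (real (K * (m + 1)) * ln (real CARD('s)))"
      by (simp only: exp_of_nat_mult) simp
    then show "real CARD('s) ^ (K * (m + 1)) \<le> exp (real K * ((real m + 1) * ln (real CARD('s))))"
      by (simp add: algebra_simps)
  qed auto
  finally show ?thesis by (simp add: algebra_simps flip: exp_add)
qed

section \<open>Decoupling the contexts by residue classes\<close>

lemma mod_Suc_neq_if_close:
  fixes t u k :: nat
  assumes "u \<noteq> t" "u \<le> t + k" "t \<le> u + k"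
  shows "u mod (k + 1) \<noteq> t mod (k + 1)"
proof
  have far: "k + 1 \<le> b - a" if "a < b" "a mod (k + 1) = b mod (k + 1)" for a b :: nat
  proof -
    have "(k + 1) dvd (b - a)" using that mod_eq_dvd_iff_nat[of a b "k + 1"] by simp
    then show ?thesis using that(1) by (simp add: dvd_imp_le)
  qed
  assume "u mod (k + 1) = t mod (k + 1)"
  then show False using far[of u t] far[of t u] assms by (cases "u < t") auto
qed

lemma ctx_override_on_residue_class:
  assumes "t \<in> A" "A \<subseteq> {u. u mod (k + 1) = i}"
  shows "ctx k (override_on zB zA A) t = ctx k zB t"
proof -
  have "u \<notin> A" if "u \<noteq> t" "t \<le> u + k" "u \<le> t + k" for u
    using mod_Suc_neq_if_close[OF that(1,3,2)] assms by auto
  then show ?thesis unfolding ctx_def by (auto simp: override_on_def)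
qed

lemma finite_context_pairs: "finite {c :: 'z::finite list \<times> 'z list. length (fst c) = k \<and> length (snd c) = k}"
  and card_context_pairs: "card {c :: 'z::finite list \<times> 'z list. length (fst c) = k \<and> length (snd c) = k}
    = CARD('z) ^ (2 * k)"
proof -
  have eq: "{c :: 'z list \<times> 'z list. length (fst c) = k \<and> length (snd c) = k}
      = {xs. set xs \<subseteq> UNIV \<and> length xs = k} \<times> {xs. set xs \<subseteq> UNIV \<and> length xs = k}"
    by auto
  show "finite {c :: 'z list \<times> 'z list. length (fst c) = k \<and> length (snd c) = k}"
    unfolding eq using finite_lists_length_eq[of "UNIV :: 'z set" k] by simp
  show "card {c :: 'z list \<times> 'z list. length (fst c) = k \<and> length (snd c) = k} = CARD('z) ^ (2 * k)"
    unfolding eq using card_lists_length_eq[of "UNIV :: 'z set" k]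
    by (simp add: card_cartesian_product mult_2 power_add)
qed

lemma restrict_mem_bounded_switch_maps:
  assumes "\<sigma> \<in> Sadm k m n z" "A \<subseteq> {k+1..n-k}" "\<And>t. t \<in> A \<Longrightarrow> ctx k z t = cf t"
  shows "restrict \<sigma> A \<in> bounded_switch_maps A cf m"
  unfolding bounded_switch_maps_def
proof (intro CollectI conjI allI)
  fix c
  define S where "S = {t\<in>A. cf t = c}"
  have "finite S" "S \<subseteq> A" using assms(2) by (auto simp: S_def finite_subset)
  then have "switch_points (restrict \<sigma> A) S = switch_points \<sigma> S"
    by (intro switch_points_cong) auto
  moreover have "S \<subseteq> Tset k n z c" using assms(2,3) by (auto simp: S_def Tset_def)
  ultimately have "card (switch_points (restrict \<sigma> A) S) \<le> card (switch_points \<sigma> (Tset k n z c))"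
    using card_switch_points_subset_le[of "Tset k n z c" S \<sigma>] by (simp add: Tset_def)
  also have "\<dots> = switches \<sigma> (Tset k n z c)"
    by (simp add: switches_eq_card_switch_points Tset_def)
  also have "\<dots> \<le> m" using assms(1) unfolding Sadm_def by blast
  finally show "card (switch_points (restrict \<sigma> A) {t\<in>A. cf t = c}) \<le> m" by (simp add: S_def)
qed simp

lemma card_bounded_switch_maps_ctx_le:
  fixes zB :: "nat \<Rightarrow> 'z::finite"
  assumes "A \<subseteq> {k+1..n-k}" "n > 2 * k" "2 * m \<le> n - 2 * k"
  shows "real (card (bounded_switch_maps A (ctx k zB) m :: (nat \<Rightarrow> 'z \<Rightarrow> 'xh::finite) set))
    \<le> exp (real (CARD('z) ^ (2 * k)) * (real (n - 2 * k) * bin_entropy (real m / real (n - 2 * k))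
           + (real m + 1) * ln (real CARD('z \<Rightarrow> 'xh))))"
proof (rule card_bounded_switch_maps_le_exp)
  show "finite A" "card A \<le> n - 2 * k"
    using assms(1) finite_subset card_mono[OF _ assms(1)] by auto
  show "ctx k zB ` A \<subseteq> {c :: 'z list \<times> 'z list. length (fst c) = k \<and> length (snd c) = k}"
    using assms(1) by (force simp: ctx_def)
qed (use assms(2,3) in \<open>auto simp: finite_context_pairs card_context_pairs\<close>)

section \<open>The uniform deviation bound\<close>

lemma sum_sqrt_share_le:
  fixes s :: "nat \<Rightarrow> nat"
  assumes "d > 0" "(\<Sum>i<d. s i) = M"
  shows "(\<Sum>i<d. sqrt (real (s i) * real M / real d)) \<le> real M"
proof -
  have "(\<Sum>i<d. 1 * sqrt (real (s i)))\<^sup>2 \<le> (\<Sum>i<d. 1\<^sup>2) * (\<Sum>i<d. (sqrt (real (s i)))\<^sup>2)"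
    by (rule Cauchy_Schwarz_ineq_sum)
  also have "\<dots> = real d * real M" using assms(2) by (simp flip: of_nat_sum)
  finally have "(\<Sum>i<d. sqrt (real (s i))) \<le> sqrt (real d * real M)"
    by (simp add: real_le_rsqrt)
  then have "sqrt (real M / real d) * (\<Sum>i<d. sqrt (real (s i))) \<le> sqrt (real M / real d) * sqrt (real d * real M)"
    by (rule mult_left_mono) simp
  also have "\<dots> = real M" using assms(1) by (simp flip: real_sqrt_mult)
  finally show ?thesis
    by (simp add: sum_distrib_left real_sqrt_mult real_sqrt_divide mult.commute)
qed

text \<open>The square-root weights make the resulting Hoeffding exponents equal for all parts.\<close>

lemma abs_sum_gt_imp_part_abs_sum_gt:
  fixes f :: "nat \<Rightarrow> real" and g :: "nat \<Rightarrow> nat"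
  assumes "finite T" "d > 0" "g ` T \<subseteq> {..<d}" "e \<ge> 0"
    and "real (card T) * e < \<bar>\<Sum>t\<in>T. f t\<bar>"
  shows "\<exists>i<d. sqrt (real (card {t\<in>T. g t = i}) * real (card T) / real d) * e
      < \<bar>\<Sum>t\<in>{t\<in>T. g t = i}. f t\<bar>"
proof (rule ccontr)
  assume "\<not> ?thesis"
  then have le: "\<bar>\<Sum>t\<in>{t\<in>T. g t = i}. f t\<bar> \<le> sqrt (real (card {t\<in>T. g t = i}) * real (card T) / real d) * e"
    if "i < d" for i
    using that by force
  have "\<bar>\<Sum>t\<in>T. f t\<bar> = \<bar>\<Sum>i<d. \<Sum>t\<in>{t\<in>T. g t = i}. f t\<bar>"
    using assms(1,3) by (subst sum.group) auto
  also have "\<dots> \<le> (\<Sum>i<d. \<bar>\<Sum>t\<in>{t\<in>T. g t = i}. f t\<bar>)" by (rule sum_abs)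
  also have "\<dots> \<le> (\<Sum>i<d. sqrt (real (card {t\<in>T. g t = i}) * real (card T) / real d)) * e"
    unfolding sum_distrib_right by (intro sum_mono le) simp
  also have "\<dots> \<le> real (card T) * e"
  proof (intro mult_right_mono sum_sqrt_share_le)
    have "(\<Sum>i<d. card {t\<in>T. g t = i}) = (\<Sum>i<d. \<Sum>t\<in>{t\<in>T. g t = i}. 1)" by simp
    also have "\<dots> = card T" using assms(1,3) by (subst sum.group) auto
    finally show "(\<Sum>i<d. card {t\<in>T. g t = i}) = card T" .
  qed (use assms in auto)
  finally show False using assms(5) by simp
qed

locale zero_mean_bounded_loss =
  fixes Ch :: "'x \<Rightarrow> 'z::finite \<Rightarrow> real" and Y :: "'x \<Rightarrow> ('z \<Rightarrow> 'xh::finite) \<Rightarrow> 'z \<Rightarrow> real"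
    and c L :: real
  assumes Ch_nonneg: "\<And>a v. Ch a v \<ge> 0" and Ch_sum: "\<And>a. (\<Sum>v\<in>UNIV. Ch a v) = 1"
    and mean_0: "\<And>a s. (\<Sum>v\<in>UNIV. Ch a v * Y a s v) = 0"
    and Y_bounds: "\<And>a s v. c \<le> Y a s v \<and> Y a s v \<le> c + L"
    and L_pos: "L > 0"
begin

lemma residue_class_deviation_bound:
  fixes x :: "nat \<Rightarrow> 'x"
  assumes "n > 2 * k" "2 * m \<le> n - 2 * k"
    and A: "A = {t\<in>{k+1..n-k}. t mod (k + 1) = i}" "A \<noteq> {}" and "thr > 0"
  shows "chan_prob Ch n x (\<lambda>z. \<exists>\<sigma>\<in>Sadm k m n z. thr < \<bar>\<Sum>t\<in>A. Y (x t) (\<sigma> t) (z t)\<bar>)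
     \<le> exp (real (CARD('z) ^ (2 * k)) * (real (n - 2 * k) * bin_entropy (real m / real (n - 2 * k))
           + (real m + 1) * ln (real CARD('z \<Rightarrow> 'xh)))) * (2 * exp (- 2 * thr\<^sup>2 / (real (card A) * L\<^sup>2)))"
    (is "_ \<le> ?Cnt * ?Bd")
proof -
  define w where "w = (\<lambda>t. Ch (x t))"
  have "finite A" "A \<subseteq> {k+1..n-k}" "A \<subseteq> {1..n}" "A \<subseteq> {u. u mod (k + 1) = i}" using A by auto
  have "prod_prob {1..n} w (\<lambda>z. \<exists>\<sigma>\<in>Sadm k m n z. thr < \<bar>\<Sum>t\<in>A. Y (x t) (\<sigma> t) (z t)\<bar>) \<le> ?Cnt * ?Bd"
  proof (rule prod_prob_le_if_conditional_le[OF _ \<open>A \<subseteq> {1..n}\<close>])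
    fix zB :: "nat \<Rightarrow> 'z"
    define G where "G = (bounded_switch_maps A (ctx k zB) m :: (nat \<Rightarrow> 'z \<Rightarrow> 'xh) set)"
    have "finite G"
      using \<open>finite A\<close> by (auto simp: G_def bounded_switch_maps_def intro: finite_subset[OF _ finite_PiE])
    have "prod_prob A w (\<lambda>zA. \<exists>\<sigma>\<in>Sadm k m n (override_on zB zA A). thr < \<bar>\<Sum>t\<in>A. Y (x t) (\<sigma> t) (override_on zB zA A t)\<bar>)
        \<le> (\<Sum>g\<in>G. prod_prob A w (\<lambda>zA. thr < \<bar>\<Sum>t\<in>A. Y (x t) (g t) (zA t)\<bar>))"
    proof (rule prod_prob_union_bound)
      fix zA :: "nat \<Rightarrow> 'z"
      assume "\<exists>\<sigma>\<in>Sadm k m n (override_on zB zA A). thr < \<bar>\<Sum>t\<in>A. Y (x t) (\<sigma> t) (override_on zB zA A t)\<bar>"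
      then obtain \<sigma> where \<sigma>: "\<sigma> \<in> Sadm k m n (override_on zB zA A)"
        "thr < \<bar>\<Sum>t\<in>A. Y (x t) (\<sigma> t) (override_on zB zA A t)\<bar>" by blast
      have "ctx k (override_on zB zA A) t = ctx k zB t" if "t \<in> A" for t
        using that \<open>A \<subseteq> {u. u mod (k + 1) = i}\<close> by (rule ctx_override_on_residue_class)
      then have "restrict \<sigma> A \<in> G" unfolding G_def
        by (rule restrict_mem_bounded_switch_maps[OF \<sigma>(1) \<open>A \<subseteq> {k+1..n-k}\<close>])
      moreover have "(\<Sum>t\<in>A. Y (x t) (restrict \<sigma> A t) (zA t)) = (\<Sum>t\<in>A. Y (x t) (\<sigma> t) (override_on zB zA A t))"
        by (intro sum.cong) auto
      ultimately show "\<exists>g\<in>G. thr < \<bar>\<Sum>t\<in>A. Y (x t) (g t) (zA t)\<bar>" using \<sigma>(2) by metis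
    qed (use \<open>finite A\<close> \<open>finite G\<close> Ch_nonneg in \<open>auto simp: w_def\<close>)
    also have "\<dots> \<le> (\<Sum>g\<in>G. ?Bd)"
      by (intro sum_mono prod_prob_abs_sum_gt_le[OF \<open>finite A\<close> A(2), where c = "\<lambda>_. c"])
        (use Ch_nonneg Ch_sum mean_0 Y_bounds L_pos \<open>thr > 0\<close> in \<open>auto simp: w_def\<close>)
    also have "\<dots> \<le> ?Cnt * ?Bd"
      using card_bounded_switch_maps_ctx_le[OF \<open>A \<subseteq> {k+1..n-k}\<close> assms(1,2)]
      by (simp add: G_def mult_right_mono)
    finally show "prod_prob A w (\<lambda>zA. \<exists>\<sigma>\<in>Sadm k m n (override_on zB zA A).
        thr < \<bar>\<Sum>t\<in>A. Y (x t) (\<sigma> t) (override_on zB zA A t)\<bar>) \<le> ?Cnt * ?Bd" .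
  qed (use Ch_nonneg Ch_sum in \<open>auto simp: w_def\<close>)
  then show ?thesis by (simp add: chan_prob_eq_prod_prob w_def)
qed

lemma residue_class_share_deviation_bound:
  fixes x :: "nat \<Rightarrow> 'x" and i :: nat
  assumes "n > 2 * k" "2 * m \<le> n - 2 * k" "\<epsilon> > 0"
  defines "A \<equiv> {t\<in>{k+1..n-k}. t mod (k + 1) = i}"
  shows "chan_prob Ch n x (\<lambda>z. \<exists>\<sigma>\<in>Sadm k m n z.
      sqrt (real (card A) * real (n - 2 * k) / real (k + 1)) * (\<epsilon> / 2) < \<bar>\<Sum>t\<in>A. Y (x t) (\<sigma> t) (z t)\<bar>)
    \<le> exp (real (CARD('z) ^ (2 * k)) * (real (n - 2 * k) * bin_entropy (real m / real (n - 2 * k))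
           + (real m + 1) * ln (real CARD('z \<Rightarrow> 'xh))))
      * (2 * exp (- real (n - 2 * k) * (\<epsilon>\<^sup>2 / (2 * (real k + 1) * L\<^sup>2))))"
proof (cases "A = {}")
  case True
  then show ?thesis by (simp add: chan_prob_def)
next
  case False
  define thr where "thr = sqrt (real (card A) * real (n - 2 * k) / real (k + 1)) * (\<epsilon> / 2)"
  have "card A > 0" using False by (simp add: A_def card_gt_0_iff)
  then have "thr > 0" using assms(1,3) by (simp add: thr_def)
  have "- 2 * thr\<^sup>2 / (real (card A) * L\<^sup>2) = - real (n - 2 * k) * (\<epsilon>\<^sup>2 / (2 * (real k + 1) * L\<^sup>2))"
    using \<open>card A > 0\<close> L_pos by (simp add: thr_def power_mult_distrib power_divide divide_simps)
  then show ?thesis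
    using residue_class_deviation_bound[OF assms(1,2) A_def[THEN meta_eq_to_obj_eq] False \<open>thr > 0\<close>, of x]
    by (simp add: thr_def)
qed

lemma uniform_deviation_bound:
  fixes x :: "nat \<Rightarrow> 'x"
  assumes "n > 2 * k" "2 * m \<le> n - 2 * k" "\<epsilon> > 0"
  shows "chan_prob Ch n x (\<lambda>z. \<exists>\<sigma>\<in>Sadm k m n z.
           real (n - 2 * k) * \<epsilon> / 2 < \<bar>\<Sum>t\<in>{k+1..n-k}. Y (x t) (\<sigma> t) (z t)\<bar>)
     \<le> 2 * (real k + 1) * exp (- real (n - 2 * k) * (\<epsilon>\<^sup>2 / (2 * (real k + 1) * L\<^sup>2)
          - real (CARD('z) ^ (2 * k)) * (bin_entropy (real m / real (n - 2 * k))
             + (real m + 1) * ln (real CARD('z \<Rightarrow> 'xh)) / real (n - 2 * k))))"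
proof -
  let ?Cnt = "exp (real (CARD('z) ^ (2 * k)) * (real (n - 2 * k) * bin_entropy (real m / real (n - 2 * k))
           + (real m + 1) * ln (real CARD('z \<Rightarrow> 'xh))))"
  let ?Bd = "exp (- real (n - 2 * k) * (\<epsilon>\<^sup>2 / (2 * (real k + 1) * L\<^sup>2)))"
  define M where "M = n - 2 * k"
  define Tc where "Tc = (\<lambda>i. {t\<in>{k+1..n-k}. t mod (k + 1) = i})"
  define thr where "thr = (\<lambda>i. sqrt (real (card (Tc i)) * real M / real (k + 1)) * (\<epsilon> / 2))"
  have "card {k+1..n-k} = M" using \<open>n > 2 * k\<close> by (simp add: M_def)
  have "chan_prob Ch n x (\<lambda>z. \<exists>\<sigma>\<in>Sadm k m n z. real M * \<epsilon> / 2 < \<bar>\<Sum>t\<in>{k+1..n-k}. Y (x t) (\<sigma> t) (z t)\<bar>)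
      \<le> (\<Sum>i<k+1. chan_prob Ch n x (\<lambda>z. \<exists>\<sigma>\<in>Sadm k m n z. thr i < \<bar>\<Sum>t\<in>Tc i. Y (x t) (\<sigma> t) (z t)\<bar>))"
    unfolding chan_prob_eq_prod_prob
  proof (rule prod_prob_union_bound)
    fix z :: "nat \<Rightarrow> 'z"
    assume "\<exists>\<sigma>\<in>Sadm k m n z. real M * \<epsilon> / 2 < \<bar>\<Sum>t\<in>{k+1..n-k}. Y (x t) (\<sigma> t) (z t)\<bar>"
    then obtain \<sigma> where "\<sigma> \<in> Sadm k m n z" "real M * (\<epsilon> / 2) < \<bar>\<Sum>t\<in>{k+1..n-k}. Y (x t) (\<sigma> t) (z t)\<bar>"
      by auto
    then show "\<exists>i\<in>{..<k+1}. \<exists>\<sigma>\<in>Sadm k m n z. thr i < \<bar>\<Sum>t\<in>Tc i. Y (x t) (\<sigma> t) (z t)\<bar>"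
      using abs_sum_gt_imp_part_abs_sum_gt[of "{k+1..n-k}" "k + 1" "\<lambda>t. t mod (k + 1)" "\<epsilon> / 2"]
        \<open>\<epsilon> > 0\<close> \<open>card {k+1..n-k} = M\<close> by (fastforce simp: thr_def Tc_def)
  qed (use Ch_nonneg in auto)
  also have "\<dots> \<le> (\<Sum>i<k+1. ?Cnt * (2 * ?Bd))"
    using residue_class_share_deviation_bound[OF assms] by (intro sum_mono) (simp add: thr_def Tc_def M_def)
  also have "\<dots> = 2 * (real k + 1) * (?Cnt * ?Bd)" by simp
  also have "?Cnt * ?Bd = exp (- real M * (\<epsilon>\<^sup>2 / (2 * (real k + 1) * L\<^sup>2)
          - real (CARD('z) ^ (2 * k)) * (bin_entropy (real m / real M)
             + (real m + 1) * ln (real CARD('z \<Rightarrow> 'xh)) / real M)))"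
  proof -
    have "real (CARD('z) ^ (2 * k)) * (real M * h + (real m + 1) * l) + - real M * e
        = - real M * (e - real (CARD('z) ^ (2 * k)) * (h + (real m + 1) * l / real M))" for e h l :: real
      using \<open>n > 2 * k\<close> by (simp add: M_def field_simps)
    then show ?thesis by (simp only: exp_add[symmetric] M_def)
  qed
  finally show ?thesis by (simp add: M_def)
qed

end

section \<open>Excess loss of the estimated-loss minimiser\<close>

lemma finite_Sadm: "finite (Sadm k m n z :: (nat \<Rightarrow> 'z::finite \<Rightarrow> 'xh::finite) set)"
proof -
  have "finite (PiE {k+1..n-k} (\<lambda>_. UNIV :: ('z \<Rightarrow> 'xh) set))" by (intro finite_PiE) auto
  then show ?thesis by (rule finite_subset[rotated]) (auto simp: Sadm_def)
qed

definition loss_dev :: "('x::finite \<Rightarrow> 'xh \<Rightarrow> real) \<Rightarrow> ('x \<Rightarrow> 'z::finite \<Rightarrow> real) \<Rightarrow> ('z \<Rightarrow> 'x \<Rightarrow> real)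
    \<Rightarrow> 'x \<Rightarrow> ('z \<Rightarrow> 'xh) \<Rightarrow> 'z \<Rightarrow> real" where
  "loss_dev \<Lambda> Ch H a s v = \<Lambda> a (s v) - ell \<Lambda> Ch H v s"

lemma sum_Ch_ell_eq_rho:
  assumes "\<forall>a b. (\<Sum>z\<in>UNIV. Ch a z * H z b) = (if a = b then 1 else 0)"
  shows "(\<Sum>v\<in>UNIV. Ch a v * ell \<Lambda> Ch H v s) = rho \<Lambda> Ch a s"
proof -
  have "(\<Sum>v\<in>UNIV. Ch a v * ell \<Lambda> Ch H v s) = (\<Sum>b\<in>UNIV. (\<Sum>v\<in>UNIV. Ch a v * H v b) * rho \<Lambda> Ch b s)"
    unfolding ell_def by (simp add: sum_distrib_left sum_distrib_right mult.assoc) (rule sum.swap)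
  also have "\<dots> = (\<Sum>b\<in>UNIV. if a = b then rho \<Lambda> Ch b s else 0)"
    using assms by (intro sum.cong) auto
  also have "\<dots> = rho \<Lambda> Ch a s" by simp
  finally show ?thesis .
qed

lemma sum_Ch_loss_dev_eq_0:
  assumes "\<forall>a b. (\<Sum>z\<in>UNIV. Ch a z * H z b) = (if a = b then 1 else 0)"
  shows "(\<Sum>v\<in>UNIV. Ch a v * loss_dev \<Lambda> Ch H a s v) = 0"
  by (simp add: loss_dev_def right_diff_distrib sum_subtractf sum_Ch_ell_eq_rho[OF assms] rho_def mult.commute)

lemma loss_dev_bounds:
  fixes \<Lambda> :: "'x::finite \<Rightarrow> 'xh::finite \<Rightarrow> real" and Ch :: "'x \<Rightarrow> 'z::finite \<Rightarrow> real"
  assumes "\<forall>a b. \<Lambda> a b \<ge> 0"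
  shows "\<exists>c. \<forall>a s v. c \<le> loss_dev \<Lambda> Ch H a s v \<and> loss_dev \<Lambda> Ch H a s v \<le> c + L_max \<Lambda> Ch H"
proof (intro exI allI)
  fix a s v
  have "{ell \<Lambda> Ch H z s | z s. True} = (\<lambda>(z, s). ell \<Lambda> Ch H z s) ` UNIV"
    "{\<Lambda> a b | a b. True} = (\<lambda>(a, b). \<Lambda> a b) ` UNIV" by auto
  then have "finite {ell \<Lambda> Ch H z s | z s. True}" "finite {\<Lambda> a b | a b. True}" by simp_all
  then have "Min {ell \<Lambda> Ch H z s | z s. True} \<le> ell \<Lambda> Ch H v s"
    "ell \<Lambda> Ch H v s \<le> Max {ell \<Lambda> Ch H z s | z s. True}" "\<Lambda> a (s v) \<le> Lam_max \<Lambda>"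
    by (auto simp: Lam_max_def intro!: Min_le Max_ge)
  moreover have "0 \<le> \<Lambda> a (s v)" using assms by blast
  ultimately show "- Max {ell \<Lambda> Ch H z s | z s. True} \<le> loss_dev \<Lambda> Ch H a s v \<and>
      loss_dev \<Lambda> Ch H a s v \<le> - Max {ell \<Lambda> Ch H z s | z s. True} + L_max \<Lambda> Ch H"
    by (auto simp: loss_dev_def L_max_def ell_max_def)
qed

lemma excess_loss_imp_deviation:
  fixes \<Lambda> :: "'x::finite \<Rightarrow> 'xh::finite \<Rightarrow> real" and Ch :: "'x \<Rightarrow> 'z::finite \<Rightarrow> real"
  assumes "n > 2 * k" and "\<sigma>' \<in> Sadm k m n z"
    and minimal: "\<forall>\<sigma>\<in>Sadm k m n z. Ltil \<Lambda> Ch H k n z \<sigma>' \<le> Ltil \<Lambda> Ch H k n z \<sigma>"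
    and excess: "Lemp \<Lambda> k n x z \<sigma>' - Dkm \<Lambda> k m n x z > \<epsilon>"
  shows "\<exists>\<sigma>\<in>Sadm k m n z.
    real (n - 2 * k) * \<epsilon> / 2 < \<bar>\<Sum>t\<in>{k+1..n-k}. loss_dev \<Lambda> Ch H (x t) (\<sigma> t) (z t)\<bar>"
proof -
  define M where "M = real (n - 2 * k)"
  define D where "D = (\<lambda>\<sigma>. \<Sum>t\<in>{k+1..n-k}. loss_dev \<Lambda> Ch H (x t) (\<sigma> t) (z t))"
  have "M > 0" using \<open>n > 2 * k\<close> by (simp add: M_def)
  have L_diff: "Lemp \<Lambda> k n x z \<sigma> - Ltil \<Lambda> Ch H k n z \<sigma> = D \<sigma> / M" for \<sigma>
    by (simp add: Lemp_def Ltil_def D_def M_def loss_dev_def sum_subtractf diff_divide_distrib)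
  have "Dkm \<Lambda> k m n x z \<in> Lemp \<Lambda> k n x z ` Sadm k m n z"
    unfolding Dkm_def using \<open>\<sigma>' \<in> Sadm k m n z\<close> by (intro Min_in finite_imageI finite_Sadm) auto
  then obtain \<sigma>\<^sub>0 where \<sigma>\<^sub>0: "\<sigma>\<^sub>0 \<in> Sadm k m n z" "Dkm \<Lambda> k m n x z = Lemp \<Lambda> k n x z \<sigma>\<^sub>0" by auto
  \<comment> \<open>\<open>\<sigma>'\<close> minimises the estimated loss, so its excess true loss over \<open>\<sigma>\<^sub>0\<close> is at most a difference of deviations\<close>
  have "\<epsilon> < D \<sigma>' / M - D \<sigma>\<^sub>0 / M"
    using excess minimal \<sigma>\<^sub>0 L_diff[of \<sigma>'] L_diff[of \<sigma>\<^sub>0] by fastforce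
  then have "M * \<epsilon> < D \<sigma>' - D \<sigma>\<^sub>0" using \<open>M > 0\<close> by (simp add: field_simps)
  then have "M * \<epsilon> / 2 < \<bar>D \<sigma>'\<bar> \<or> M * \<epsilon> / 2 < \<bar>D \<sigma>\<^sub>0\<bar>" by linarith
  then show ?thesis using \<open>\<sigma>' \<in> Sadm k m n z\<close> \<sigma>\<^sub>0(1) unfolding D_def M_def by blast
qed

lemma bin_entropy_add_log_card_nonneg:
  assumes "m \<le> M"
  shows "0 \<le> bin_entropy (real m / real M) + (real m + 1) * ln (real CARD('a::finite)) / real M"
proof -
  have "bin_entropy (real m / real M) \<ge> 0"
    using assms by (intro bin_entropy_nonneg) (auto simp: divide_le_eq_1)
  moreover have "ln (real CARD('a)) \<ge> 0" by (simp add: Suc_le_eq)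
  ultimately show ?thesis by simp
qed

lemma loss_deviation_bound:
  fixes \<Lambda> :: "'x::finite \<Rightarrow> 'xh::finite \<Rightarrow> real" and Ch :: "'x \<Rightarrow> 'z::finite \<Rightarrow> real"
    and x :: "nat \<Rightarrow> 'x"
  assumes Ch_nonneg: "\<forall>a z. Ch a z \<ge> 0" and Ch_sum: "\<forall>a. (\<Sum>z\<in>UNIV. Ch a z) = 1"
    and PiH: "\<forall>a b. (\<Sum>z\<in>UNIV. Ch a z * H z b) = (if a = b then 1 else 0)"
    and Lam_nonneg: "\<forall>a b. \<Lambda> a b \<ge> 0"
    and "n > 2 * k" "2 * m \<le> n - 2 * k" "\<epsilon> > 0"
  shows "chan_prob Ch n x (\<lambda>z. \<exists>\<sigma>\<in>Sadm k m n z.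
           real (n - 2 * k) * \<epsilon> / 2 < \<bar>\<Sum>t\<in>{k+1..n-k}. loss_dev \<Lambda> Ch H (x t) (\<sigma> t) (z t)\<bar>)
     \<le> 2 * (real k + 1) * exp (- real (n - 2 * k) * (\<epsilon>\<^sup>2 / (2 * (real k + 1) * (L_max \<Lambda> Ch H)\<^sup>2)
          - real (CARD('z) ^ (2 * k)) * (bin_entropy (real m / real (n - 2 * k))
             + (real m + 1) * ln (real CARD('z \<Rightarrow> 'xh)) / real (n - 2 * k))))"
    (is "?P \<le> 2 * (real k + 1) * exp (- ?M * (?e - ?K * ?X))")
proof -
  obtain c where bounds: "\<And>a s v. c \<le> loss_dev \<Lambda> Ch H a s v \<and> loss_dev \<Lambda> Ch H a s v \<le> c + L_max \<Lambda> Ch H"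
    using loss_dev_bounds[OF Lam_nonneg] by blast
  show ?thesis
  proof (cases "L_max \<Lambda> Ch H = 0")
    case True
    have "?X \<ge> 0" using \<open>2 * m \<le> n - 2 * k\<close> by (intro bin_entropy_add_log_card_nonneg) simp
    have "?P \<le> 1"
      unfolding chan_prob_eq_prod_prob using Ch_nonneg Ch_sum by (intro prod_prob_le_1) auto
    also have "\<dots> \<le> exp (?M * (?K * ?X))" using \<open>?X \<ge> 0\<close> by simp
    also have "\<dots> \<le> 2 * (real k + 1) * exp (?M * (?K * ?X))" by simp
    finally show ?thesis using True by simp
  next
    case False
    then have "L_max \<Lambda> Ch H > 0" using bounds[of undefined undefined undefined] by simp
    interpret zero_mean_bounded_loss Ch "loss_dev \<Lambda> Ch H" c "L_max \<Lambda> Ch H"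
      using Ch_nonneg Ch_sum sum_Ch_loss_dev_eq_0[OF PiH] bounds \<open>L_max \<Lambda> Ch H > 0\<close>
      by unfold_locales auto
    show ?thesis using uniform_deviation_bound[OF assms(5-7)] .
  qed
qed

theorem theorem3:
  fixes Ch :: "'x::finite \<Rightarrow> 'z::finite \<Rightarrow> real"
    and \<Lambda> :: "'x \<Rightarrow> 'xh::finite \<Rightarrow> real"
    and H :: "'z \<Rightarrow> 'x \<Rightarrow> real"
    and k n m :: nat
    and Shat :: "(nat \<Rightarrow> 'z) \<Rightarrow> nat \<Rightarrow> 'z \<Rightarrow> 'xh"
    and \<epsilon> :: real
    and x :: "nat \<Rightarrow> 'x"
  assumes Pi_nonneg: "\<forall>a z. Ch a z \<ge> 0"
    and Pi_stoch: "\<forall>a. (\<Sum>z\<in>UNIV. Ch a z) = 1"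
    and Pi_full_row_rank: "\<forall>c :: 'x \<Rightarrow> real. (\<forall>z. (\<Sum>a\<in>UNIV. c a * Ch a z) = 0) \<longrightarrow> (\<forall>a. c a = 0)"
    and PiH: "\<forall>a b. (\<Sum>z\<in>UNIV. Ch a z * H z b) = (if a = b then 1 else 0)"
    and Lam_nonneg: "\<forall>a b. \<Lambda> a b \<ge> 0"
    and n_gt: "n > 2 * k"
    and m_le: "m \<le> (n - 2 * k) div 2"
    and Shat_min: "\<forall>z\<in>seqs n. Shat z \<in> Sadm k m n z \<and>
        (\<forall>\<sigma>\<in>Sadm k m n z. Ltil \<Lambda> Ch H k n z (Shat z) \<le> Ltil \<Lambda> Ch H k n z \<sigma>)"
    and eps: "\<epsilon> > 0"
  shows "chan_prob Ch n x (\<lambda>z. Lemp \<Lambda> k n x z (Shat z) - Dkm \<Lambda> k m n x z > \<epsilon>)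
    \<le> 2 * (real k + 1) * exp (- real (n - 2 * k) *
         (\<epsilon>\<^sup>2 / (2 * (real k + 1) * (L_max \<Lambda> Ch H)\<^sup>2)
          - 2 * real (card (UNIV :: 'z set) ^ (2 * k)) *
            (bin_entropy (real m / real (n - 2 * k))
             + (real m + 1) * ln (real (card (UNIV :: ('z \<Rightarrow> 'xh) set))) / real (n - 2 * k))))"
proof -
  define M where "M = real (n - 2 * k)"
  define X where "X = bin_entropy (real m / M) + (real m + 1) * ln (real CARD('z \<Rightarrow> 'xh)) / M"
  have "2 * m \<le> n - 2 * k" using m_le by simp
  have "X \<ge> 0"
    unfolding X_def M_def by (rule bin_entropy_add_log_card_nonneg) (use \<open>2 * m \<le> n - 2 * k\<close> in simp)
  then have "M * (real (CARD('z) ^ (2 * k)) * X) \<ge> 0" by (simp add: M_def)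
  have "chan_prob Ch n x (\<lambda>z. Lemp \<Lambda> k n x z (Shat z) - Dkm \<Lambda> k m n x z > \<epsilon>)
      \<le> chan_prob Ch n x (\<lambda>z. \<exists>\<sigma>\<in>Sadm k m n z.
           M * \<epsilon> / 2 < \<bar>\<Sum>t\<in>{k+1..n-k}. loss_dev \<Lambda> Ch H (x t) (\<sigma> t) (z t)\<bar>)"
    unfolding chan_prob_eq_prod_prob M_def
  proof (rule prod_prob_mono)
    fix z :: "nat \<Rightarrow> 'z"
    assume "z \<in> PiE {1..n} (\<lambda>_. UNIV)" "Lemp \<Lambda> k n x z (Shat z) - Dkm \<Lambda> k m n x z > \<epsilon>"
    then show "\<exists>\<sigma>\<in>Sadm k m n z.
        real (n - 2 * k) * \<epsilon> / 2 < \<bar>\<Sum>t\<in>{k+1..n-k}. loss_dev \<Lambda> Ch H (x t) (\<sigma> t) (z t)\<bar>"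
      using Shat_min by (intro excess_loss_imp_deviation[OF n_gt]) (auto simp: seqs_def)
  qed (use Pi_nonneg in auto)
  also have "\<dots> \<le> 2 * (real k + 1) * exp (- M * (\<epsilon>\<^sup>2 / (2 * (real k + 1) * (L_max \<Lambda> Ch H)\<^sup>2)
      - real (CARD('z) ^ (2 * k)) * X))"
    unfolding M_def X_def
    by (rule loss_deviation_bound[OF Pi_nonneg Pi_stoch PiH Lam_nonneg n_gt \<open>2 * m \<le> n - 2 * k\<close> eps])
  also have "\<dots> \<le> 2 * (real k + 1) * exp (- M * (\<epsilon>\<^sup>2 / (2 * (real k + 1) * (L_max \<Lambda> Ch H)\<^sup>2)
      - 2 * real (CARD('z) ^ (2 * k)) * X))"
    using \<open>M * (real (CARD('z) ^ (2 * k)) * X) \<ge> 0\<close> by (simp add: right_diff_distrib mult.commute)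
  finally show ?thesis by (simp add: M_def X_def)
qed

end
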